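(* Let $R = R_1\times\cdots\times R_t$ be a finite commutative ring with identity, where each $R_i$ is a local ring. Then the involutory Cayley graph $\Gamma(R)$ is connected if and only if at most one of the factors $R_i$ has even order, that factor (if it exists) has connected involutory Cayley graph $\Gamma(R_i)$, and every other factor $R_j$ is isomorphic to $\mathbb{Z}_{p_j^{n_j}}$ for some odd prime $p_j$ and positive integer $n_j$.
   Context: All rings are finite, commutative, with nonzero identity. An element $u$ of a ring $R$ is an involution if $u^2=1$; $\mathrm{Inv}(R)$ denotes the set of involutions. The involutory Cayley graph $\Gamma(R)$ is the simple undirected graph with vertex set $R$ in which distinct $x,y$ are adjacent iff $(x-y)^2=1$, i.e. the Cayley graph of $(R,+)$ with respect to $\mathrm{Inv}(R)$; it is $|\mathrm{Inv}(R)|$-regular. *)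

theory Defs
  imports "HOL-Algebra.Algebra" "HOL-Number_Theory.Residues"
begin

definition Inv :: "('a, 'm) ring_scheme \<Rightarrow> 'a set" where
  "Inv R = {u \<in> carrier R. u \<otimes>\<^bsub>R\<^esub> u = \<one>\<^bsub>R\<^esub>}"

definition inv_cayley_edges :: "('a, 'm) ring_scheme \<Rightarrow> ('a \<times> 'a) set" where
  "inv_cayley_edges R = {(x, y). x \<in> carrier R \<and> y \<in> carrier R \<and> x \<noteq> y \<and>
      (x \<ominus>\<^bsub>R\<^esub> y) \<otimes>\<^bsub>R\<^esub> (x \<ominus>\<^bsub>R\<^esub> y) = \<one>\<^bsub>R\<^esub>}"

definition inv_cayley_connected :: "('a, 'm) ring_scheme \<Rightarrow> bool" where
  "inv_cayley_connected R \<longleftrightarrow>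
     (\<forall>x \<in> carrier R. \<forall>y \<in> carrier R. (x, y) \<in> (inv_cayley_edges R)\<^sup>*)"

definition local_ring :: "('a, 'm) ring_scheme \<Rightarrow> bool" where
  "local_ring R \<longleftrightarrow> cring R \<and> (\<exists>!I. maximalideal I R)"

end

theory Submission
  imports Defs "HOL-Library.Z2"
begin

(*
  Gamma(R) is the Cayley graph of (R, +) with respect to Inv R, so it is connected iff the
  component of 0, the additive subgroup generated by Inv R, is all of R.

  In a finite local ring of odd order 2 is a unit, hence Inv R = {1, -1}; so Gamma(R) is
  connected iff every element is a multiple of 1, i.e. R = Z/|R|, and locality forces |R| to be
  a prime power. In a local ring of even order 2 lies in the maximal ideal M and every involution
  is congruent to 1 modulo M.

  Coordinate projections of a product preserve connectivity. If two factors R_i, R_j have even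
  order, subtracting an involution swaps the conditions "x_i, x_j in M" and "x_i - 1, x_j - 1 in M",
  so the vector with 1 in coordinate i and 0 elsewhere is unreachable from 0. Conversely, for an
  odd factor Z/p^n the involutions (1,...,1) and (1,...,-1,...,1) differ by 2 in that coordinate,
  and 2 generates Z/p^n additively. Summing such vectors gives (1,...,1,0,1,...,1) with 0 at the
  even factor e; subtracting it from the involution (1,...,u,...,1) isolates any involution u of
  R_e in coordinate e, and these generate R_e when Gamma(R_e) is connected.
*)

section \<open>The component of zero\<close>

definition zero_component :: "('a, 'm) ring_scheme \<Rightarrow> 'a set" where
  "zero_component R = {y. (\<zero>\<^bsub>R\<^esub>, y) \<in> (inv_cayley_edges R)\<^sup>*}"

context ring
begin

lemma inv_cayley_edges_iff:
  "(x, y) \<in> inv_cayley_edges R \<longleftrightarrow>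
     x \<in> carrier R \<and> y \<in> carrier R \<and> x \<noteq> y \<and> x \<ominus> y \<in> Inv R"
  by (auto simp: inv_cayley_edges_def Inv_def)

lemma Inv_closed: "u \<in> Inv R \<Longrightarrow> u \<in> carrier R"
  by (simp add: Inv_def)

lemma inv_cayley_edges_translate:
  assumes "(x, y) \<in> (inv_cayley_edges R)\<^sup>*" "z \<in> carrier R"
  shows "(x \<oplus> z, y \<oplus> z) \<in> (inv_cayley_edges R)\<^sup>*"
  using assms(1)
proof (induction rule: rtrancl_induct)
  case (step y w)
  have "(y \<oplus> z) \<ominus> (w \<oplus> z) = y \<ominus> w"
    using step.hyps(2) assms(2) by (auto simp: inv_cayley_edges_iff) algebra
  with step.hyps(2) assms(2) have "(y \<oplus> z, w \<oplus> z) \<in> inv_cayley_edges R"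
    by (auto simp: inv_cayley_edges_iff)
  with step.IH show ?case by simp
qed simp

lemma inv_cayley_connected_iff_zero_component:
  "inv_cayley_connected R \<longleftrightarrow> carrier R \<subseteq> zero_component R"
proof
  assume "carrier R \<subseteq> zero_component R"
  show "inv_cayley_connected R"
    unfolding inv_cayley_connected_def
  proof (intro ballI)
    fix x y assume "x \<in> carrier R" "y \<in> carrier R"
    with \<open>carrier R \<subseteq> zero_component R\<close>
    have "(\<zero> \<oplus> x, (y \<ominus> x) \<oplus> x) \<in> (inv_cayley_edges R)\<^sup>*"
      by (intro inv_cayley_edges_translate) (auto simp: zero_component_def)
    moreover have "(y \<ominus> x) \<oplus> x = y"
      using \<open>x \<in> carrier R\<close> \<open>y \<in> carrier R\<close> by algebra
    ultimately show "(x, y) \<in> (inv_cayley_edges R)\<^sup>*"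
      using \<open>x \<in> carrier R\<close> by simp
  qed
qed (auto simp: inv_cayley_connected_def zero_component_def)

lemma zero_component_induct [consumes 1, case_names zero diff]:
  assumes "y \<in> zero_component R"
    and "P \<zero>"
    and "\<And>y u. P y \<Longrightarrow> y \<in> carrier R \<Longrightarrow> u \<in> Inv R \<Longrightarrow> P (y \<ominus> u)"
  shows "P y"
proof -
  from assms(1) have "(\<zero>, y) \<in> (inv_cayley_edges R)\<^sup>*"
    by (simp add: zero_component_def)
  then show ?thesis
  proof (induction rule: rtrancl_induct)
    case (step y w)
    then have "y \<in> carrier R" "y \<ominus> w \<in> Inv R" "w = y \<ominus> (y \<ominus> w)"
      by (auto simp: inv_cayley_edges_iff) algebra
    with step.IH show ?case
      by (metis assms(3))
  qed (rule assms(2))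
qed

lemma zero_component_closed: "y \<in> zero_component R \<Longrightarrow> y \<in> carrier R"
  by (induction rule: zero_component_induct) (auto dest: Inv_closed)

lemma Inv_subset_zero_component: "Inv R \<subseteq> zero_component R"
proof
  fix u assume u: "u \<in> Inv R"
  show "u \<in> zero_component R"
  proof (cases "u = \<zero>")
    case False
    with u have "(\<zero>, u) \<in> inv_cayley_edges R"
      by (auto simp: inv_cayley_edges_iff Inv_def a_minus_def l_minus r_minus)
    then show ?thesis by (simp add: zero_component_def)
  qed (simp add: zero_component_def)
qed

lemma zero_component_add:
  assumes "x \<in> zero_component R" "y \<in> zero_component R"
  shows "x \<oplus> y \<in> zero_component R"
proof -
  have "x \<in> carrier R" "y \<in> carrier R"
    using assms zero_component_closed by auto
  then have "(\<zero> \<oplus> x, y \<oplus> x) \<in> (inv_cayley_edges R)\<^sup>*"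
    using assms(2) by (intro inv_cayley_edges_translate) (auto simp: zero_component_def)
  with assms(1) \<open>x \<in> carrier R\<close> \<open>y \<in> carrier R\<close> show ?thesis
    by (auto simp: zero_component_def a_comm)
qed

lemma zero_component_neg:
  assumes "x \<in> zero_component R"
  shows "\<ominus> x \<in> zero_component R"
  using assms
proof (induction rule: zero_component_induct)
  case (diff y u)
  then have "\<ominus> (y \<ominus> u) = \<ominus> y \<oplus> u"
    using Inv_closed by algebra
  with diff show ?case
    using zero_component_add Inv_subset_zero_component by auto
qed (simp add: zero_component_def)

lemma zero_component_diff:
  "x \<in> zero_component R \<Longrightarrow> y \<in> zero_component R \<Longrightarrow> x \<ominus> y \<in> zero_component R"
  by (simp add: a_minus_def zero_component_add zero_component_neg)

lemma additive_subgroup_zero_component: "additive_subgroup (zero_component R) R"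
proof (rule additive_subgroupI, rule add.subgroupI)
  show "zero_component R \<noteq> {}"
    by (auto simp: zero_component_def)
qed (auto simp: zero_component_closed zero_component_add zero_component_neg)

end

section \<open>Finite rings\<close>

lemma ring_hom_add_pow:
  assumes "h \<in> ring_hom R S" "ring R" "ring S" "x \<in> carrier R"
  shows "h (add_pow R (k::nat) x) = add_pow S k (h x)"
proof (induction k)
  case 0
  interpret R: ring R by fact
  interpret S: ring S by fact
  show ?case using ring_hom_zero[OF assms(1-3)] by simp
next
  case (Suc k)
  interpret R: ring R by fact
  interpret S: ring S by fact
  show ?case
    using ring_hom_add[OF assms(1) R.add.nat_pow_closed[OF assms(4)] assms(4)] Suc by simp
qed

lemma residue_ring_add_pow_one:
  "add_pow (residue_ring m) (k::nat) \<one>\<^bsub>residue_ring m\<^esub> = int k mod m"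
proof (induction k)
  case (Suc k)
  then show ?case
    by (simp add: add_pow_def residue_ring_def mod_simps add.commute)
qed (simp add: add_pow_def residue_ring_def)

lemma prime_power_if_unique_prime_divisor:
  fixes m :: nat
  assumes "m > 1"
    and unique: "\<And>p q. Factorial_Ring.prime p \<Longrightarrow> Factorial_Ring.prime q \<Longrightarrow>
      p dvd m \<Longrightarrow> q dvd m \<Longrightarrow> p = q"
  shows "\<exists>p n. Factorial_Ring.prime p \<and> n > 0 \<and> m = p ^ n"
proof -
  obtain p where p: "Factorial_Ring.prime p" "p dvd m"
    using prime_factor_nat[of m] assms(1) by auto
  obtain y where y: "m = p ^ multiplicity p m * y" "\<not> p dvd y"
  proof (rule multiplicity_decompose')
    show "m \<noteq> 0" using assms(1) by simp
    show "\<not> is_unit p" using p(1) not_prime_unit by blast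
  qed
  have "y = 1"
  proof (rule ccontr)
    assume "y \<noteq> 1"
    then obtain q where "Factorial_Ring.prime q" "q dvd y"
      using prime_factor_nat by blast
    with y p unique[of p q] show False
      by (metis dvd_mult)
  qed
  with y p assms(1) show ?thesis
    by (metis gr0I mult.right_neutral power_0 less_irrefl)
qed

lemma even_card_if_fixpoint_free_involution:
  assumes "finite A" "\<And>x. x \<in> A \<Longrightarrow> g x \<in> A" "\<And>x. x \<in> A \<Longrightarrow> g (g x) = x"
    and "\<And>x. x \<in> A \<Longrightarrow> g x \<noteq> x"
  shows "even (card A)"
proof -
  have "of_nat (card A) = (\<Sum>x\<in>A. 1 :: bit)"
    by simp
  also have "\<dots> = 0"
    by (rule sum_involution_eq_0[where h = g]) (use assms in auto)
  finally have "(of_nat (card A) :: bit) = 0" .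
  moreover have "(of_nat n :: bit) = 0 \<longleftrightarrow> even n" for n
    by (induction n) auto
  ultimately show ?thesis
    by blast
qed

context ring
begin

lemma add_pow_one_mult: "add_pow R (a::nat) \<one> \<otimes> add_pow R b \<one> = add_pow R (a * b) \<one>"
  by (simp add: add_pow_ldistr add.nat_pow_pow mult.commute)

lemma add_pow_card_eq_zero:
  assumes "finite (carrier R)" "x \<in> carrier R"
  shows "add_pow R (card (carrier R)) x = \<zero>"
  using add.pow_order_eq_1[OF assms(2)] by (simp add: order_def)

lemma add_pow_mod_card:
  assumes "finite (carrier R)" "x \<in> carrier R"
  shows "add_pow R k x = add_pow R (k mod card (carrier R)) x"
proof -
  let ?m = "card (carrier R)"
  have "add_pow R k x = add_pow R (?m * (k div ?m)) x \<oplus> add_pow R (k mod ?m) x"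
    using assms(2) by (simp add: add.nat_pow_mult)
  also have "add_pow R (?m * (k div ?m)) x = \<zero>"
    using assms by (simp add: add.nat_pow_pow[symmetric] add_pow_card_eq_zero)
  finally show ?thesis
    using assms(2) by simp
qed

lemma add_pow_card_minus_one:
  assumes "finite (carrier R)" "x \<in> carrier R"
  shows "add_pow R (card (carrier R) - 1) x = \<ominus> x"
proof -
  have "card (carrier R) > 0"
    using assms(1) by (auto simp: card_gt_0_iff)
  have "add_pow R (card (carrier R) - 1) x \<oplus> x = add_pow R (card (carrier R) - 1 + 1) x"
    using assms(2) add.nat_pow_mult[of x "card (carrier R) - 1" 1] by simp
  also have "\<dots> = \<zero>"
    using \<open>card (carrier R) > 0\<close> add_pow_card_eq_zero[OF assms] by simp
  finally show ?thesis
    using assms(2) by (simp add: minus_equality)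
qed

lemma add_pow_one_eq_iff_mod:
  assumes fin: "finite (carrier R)"
    and gen: "carrier R \<subseteq> range (\<lambda>k::nat. add_pow R k \<one>)"
  shows "add_pow R a \<one> = add_pow R b \<one> \<longleftrightarrow>
         a mod card (carrier R) = b mod card (carrier R)"
proof -
  let ?m = "card (carrier R)" and ?\<psi> = "\<lambda>k::nat. add_pow R k \<one>"
  have "?m > 0"
    using fin by (auto simp: card_gt_0_iff)
  have "?\<psi> ` {..<?m} = carrier R"
  proof
    show "carrier R \<subseteq> ?\<psi> ` {..<?m}"
    proof
      fix x assume "x \<in> carrier R"
      with gen obtain k where "x = ?\<psi> k" by blast
      then have "x = ?\<psi> (k mod ?m)"
        using add_pow_mod_card[OF fin one_closed] by metis
      with \<open>?m > 0\<close> show "x \<in> ?\<psi> ` {..<?m}" by auto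
    qed
  qed auto
  then have "inj_on ?\<psi> {..<?m}"
    by (intro eq_card_imp_inj_on) simp_all
  have "?\<psi> a = ?\<psi> b \<longleftrightarrow> ?\<psi> (a mod ?m) = ?\<psi> (b mod ?m)"
    using add_pow_mod_card[OF fin one_closed] by metis
  also have "\<dots> \<longleftrightarrow> a mod ?m = b mod ?m"
    using inj_on_eq_iff[OF \<open>inj_on ?\<psi> {..<?m}\<close>] \<open>?m > 0\<close> by simp
  finally show ?thesis .
qed

lemma is_ring_iso_residue_ring_if_generated_by_one:
  assumes fin: "finite (carrier R)"
    and gen: "carrier R \<subseteq> range (\<lambda>k::nat. add_pow R k \<one>)"
    and nontrivial: "\<one> \<noteq> \<zero>"
  shows "R \<simeq> residue_ring (int (card (carrier R)))"
proof -
  let ?m = "card (carrier R)"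
  let ?Z = "residue_ring (int ?m)"
  define h where "h c = add_pow R (nat c) \<one>" for c
  have "card {\<zero>, \<one>} \<le> ?m"
    using fin by (intro card_mono) auto
  with nontrivial have "int ?m > 1" by simp
  have h_mod: "h (c mod int ?m) = h c" if "c \<ge> 0" for c
  proof -
    have "nat (c mod int ?m) = nat c mod ?m"
      using that by (simp add: nat_mod_distrib)
    then show ?thesis
      unfolding h_def using add_pow_mod_card[OF fin one_closed, of "nat c"] by simp
  qed
  have "h \<in> ring_iso ?Z R"
  proof (rule ring_iso_memI)
    fix x y assume "x \<in> carrier ?Z" "y \<in> carrier ?Z"
    then have "x \<ge> 0" "y \<ge> 0"
      by (auto simp: residue_ring_def)
    have "h (x \<otimes>\<^bsub>?Z\<^esub> y) = h (x * y)"
      using h_mod \<open>x \<ge> 0\<close> \<open>y \<ge> 0\<close> by (simp add: residue_ring_def)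
    also have "\<dots> = h x \<otimes> h y"
      using \<open>x \<ge> 0\<close> \<open>y \<ge> 0\<close> by (simp add: h_def nat_mult_distrib add_pow_one_mult)
    finally show "h (x \<otimes>\<^bsub>?Z\<^esub> y) = h x \<otimes> h y" .
    have "h (x \<oplus>\<^bsub>?Z\<^esub> y) = h (x + y)"
      using h_mod \<open>x \<ge> 0\<close> \<open>y \<ge> 0\<close> by (simp add: residue_ring_def)
    also have "\<dots> = h x \<oplus> h y"
      using \<open>x \<ge> 0\<close> \<open>y \<ge> 0\<close> by (simp add: h_def nat_add_distrib add.nat_pow_mult)
    finally show "h (x \<oplus>\<^bsub>?Z\<^esub> y) = h x \<oplus> h y" .
  next
    have "inj_on h {0..int ?m - 1}"
      using add_pow_one_eq_iff_mod[OF fin gen] by (auto simp: inj_on_def h_def)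
    moreover have "carrier R \<subseteq> h ` {0..int ?m - 1}"
    proof
      fix x assume "x \<in> carrier R"
      with gen obtain k where "x = h (int k)"
        by (auto simp: h_def)
      then have "x = h (int k mod int ?m)"
        using h_mod by simp
      with \<open>int ?m > 1\<close> show "x \<in> h ` {0..int ?m - 1}"
        by simp
    qed
    ultimately show "bij_betw h (carrier ?Z) (carrier R)"
      by (auto simp: bij_betw_def residue_ring_def h_def)
  qed (simp_all add: h_def residue_ring_def)
  moreover have "ring ?Z"
    using residues.cring[of "int ?m"] \<open>int ?m > 1\<close> by (simp add: residues_def cring.axioms(1))
  ultimately show ?thesis
    using ring_iso_sym unfolding is_ring_iso_def by blast
qed

lemma generated_by_one_if_is_ring_iso_residue_ring:
  assumes "R \<simeq> residue_ring m" "m > 1"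
  shows "carrier R \<subseteq> range (\<lambda>k::nat. add_pow R k \<one>)"
proof
  fix a assume "a \<in> carrier R"
  from assms(1) obtain f where f: "f \<in> ring_iso R (residue_ring m)"
    by (auto simp: is_ring_iso_def)
  have "ring (residue_ring m)"
    using residues.cring[of m] assms(2) by (simp add: residues_def cring.axioms(1))
  define c where "c = f a"
  have "c \<in> carrier (residue_ring m)"
    using f \<open>a \<in> carrier R\<close> by (auto simp: c_def ring_iso_def ring_hom_closed)
  then have "c \<in> {0..m - 1}"
    by (simp add: residue_ring_def)
  have "f (add_pow R (nat c) \<one>) = add_pow (residue_ring m) (nat c) \<one>\<^bsub>residue_ring m\<^esub>"
    using f ring_hom_add_pow[OF _ ring_axioms \<open>ring (residue_ring m)\<close> one_closed]
    by (simp add: ring_iso_def ring_hom_one)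
  also have "\<dots> = f a"
    using \<open>c \<in> {0..m - 1}\<close> by (simp add: residue_ring_add_pow_one c_def)
  finally have "add_pow R (nat c) \<one> = a"
    using f \<open>a \<in> carrier R\<close> by (auto simp: ring_iso_def bij_betw_def inj_on_def)
  then show "a \<in> range (\<lambda>k::nat. add_pow R k \<one>)" by blast
qed

lemma generated_by_Units_if_generated_by_one:
  assumes "u \<in> Units R" "carrier R \<subseteq> range (\<lambda>k::nat. add_pow R k \<one>)"
  shows "carrier R \<subseteq> range (\<lambda>k::nat. add_pow R k u)"
proof
  fix a assume "a \<in> carrier R"
  then have "inv u \<otimes> a \<in> carrier R"
    using assms(1) by simp
  with assms(2) obtain k :: nat where k: "inv u \<otimes> a = add_pow R k \<one>"
    by blast
  have "a = u \<otimes> (inv u \<otimes> a)"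
    using assms(1) \<open>a \<in> carrier R\<close> by (simp add: m_assoc[symmetric] Units_closed)
  also have "\<dots> = add_pow R k u"
    using assms(1) by (simp add: k add_pow_rdistr Units_closed)
  finally show "a \<in> range (\<lambda>k::nat. add_pow R k u)" by blast
qed

lemma Units_mult_eq_zero:
  "a \<in> Units R \<Longrightarrow> b \<in> carrier R \<Longrightarrow> a \<otimes> b = \<zero> \<Longrightarrow> b = \<zero>"
  using Units_l_cancel[of a b \<zero>] Units_closed[of a] by simp

lemma two_Units_if_odd_card:
  assumes "finite (carrier R)" "odd (card (carrier R))"
  shows "\<one> \<oplus> \<one> \<in> Units R"
proof -
  define k where "k = Suc (card (carrier R)) div 2"
  have "2 * k = Suc (card (carrier R))"
    using assms(2) by (simp add: k_def)
  then have "add_pow R (2::nat) \<one> \<otimes> add_pow R k \<one> = add_pow R (Suc (card (carrier R))) \<one>"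
    using add_pow_one_mult[of 2 k] by metis
  also have "\<dots> = \<one>"
    using add_pow_card_eq_zero[OF assms(1) one_closed] by simp
  finally have "(\<one> \<oplus> \<one>) \<otimes> add_pow R k \<one> = \<one>"
    by (simp add: numeral_2_eq_2)
  moreover have "add_pow R k \<one> \<otimes> (\<one> \<oplus> \<one>) = (\<one> \<oplus> \<one>) \<otimes> add_pow R k \<one>"
    by (simp add: add_pow_ldistr add_pow_rdistr)
  ultimately show ?thesis
    unfolding Units_def by force
qed

lemma odd_card_if_two_Units:
  assumes "finite (carrier R)" "\<one> \<oplus> \<one> \<in> Units R"
  shows "odd (card (carrier R))"
proof -
  have "even (card (carrier R - {\<zero>}))"
  proof (rule even_card_if_fixpoint_free_involution[where g = "a_inv R"])
    fix x assume x: "x \<in> carrier R - {\<zero>}"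
    show "\<ominus> x \<noteq> x"
    proof
      assume "\<ominus> x = x"
      with x have "(\<one> \<oplus> \<one>) \<otimes> x = \<zero>"
        using l_distr[of \<one> \<one> x] r_neg[of x] by simp
      with x assms(2) show False
        using Units_mult_eq_zero by blast
    qed
  qed (use assms(1) in auto)
  moreover have "card (carrier R) > 0"
    using assms(1) by (auto simp: card_gt_0_iff)
  ultimately show ?thesis
    by (simp add: card_Diff_singleton)
qed

end

section \<open>Finite local rings\<close>

locale finite_local_ring = cring +
  fixes M
  assumes maximalideal_M: "maximalideal M R"
    and maximalideal_unique: "\<And>I. maximalideal I R \<Longrightarrow> I = M"
    and finite_carrier: "finite (carrier R)"
begin

sublocale M: maximalideal M R
  by (rule maximalideal_M)

lemma one_notin_M: "\<one> \<notin> M"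
  using M.I_notcarr M.one_imp_carrier by blast

lemma one_neq_zero: "\<one> \<noteq> \<zero>"
  using one_notin_M M.zero_closed by auto

lemma diff_in_M: "x \<in> M \<Longrightarrow> y \<in> M \<Longrightarrow> x \<ominus> y \<in> M"
  by (simp add: a_minus_def)

lemma Units_notin_M: "x \<in> Units R \<Longrightarrow> x \<notin> M"
  using one_notin_M M.I_l_closed by (fastforce simp: Units_def)

lemma Units_if_notin_M:
  assumes "x \<in> carrier R" "x \<notin> M"
  shows "x \<in> Units R"
proof (rule ccontr)
  assume "x \<notin> Units R"
  let ?A = "{J. ideal J R \<and> \<one> \<notin> J \<and> x \<in> J}"
  have "PIdl x \<in> ?A"
    using assms(1) \<open>x \<notin> Units R\<close> ideal_eq_carrier_iff[OF assms(1)]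
      cgenideal_ideal[OF assms(1)] cgenideal_self[OF assms(1)] ideal.one_imp_carrier
    by blast
  moreover have "finite ?A"
    using finite_carrier by (rule finite_subset[rotated, OF finite_Pow_iff[THEN iffD2]])
      (auto dest: ideal.Icarr)
  ultimately obtain J where J: "J \<in> ?A" and J_max: "\<And>J'. J' \<in> ?A \<Longrightarrow> J \<subseteq> J' \<Longrightarrow> J' = J"
    using finite_has_maximal[of ?A] by blast
  have "maximalideal J R"
  proof (rule maximalidealI)
    fix J' assume "ideal J' R" "J \<subseteq> J'" "J' \<subseteq> carrier R"
    then show "J' = J \<or> J' = carrier R"
      using J J_max[of J'] ideal.one_imp_carrier by blast
  qed (use J ideal.one_imp_carrier in auto)
  with J assms(2) show False
    using maximalideal_unique by blast
qed

lemma two_in_M_if_even_card: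
  assumes "even (card (carrier R))"
  shows "\<one> \<oplus> \<one> \<in> M"
  using assms odd_card_if_two_Units[OF finite_carrier] Units_if_notin_M by blast

lemma Inv_eq_if_odd_card:
  assumes "odd (card (carrier R))"
  shows "Inv R = {\<one>, \<ominus> \<one>}"
proof
  show "{\<one>, \<ominus> \<one>} \<subseteq> Inv R"
    by (auto simp: Inv_def l_minus r_minus)
next
  show "Inv R \<subseteq> {\<one>, \<ominus> \<one>}"
  proof
    fix u assume "u \<in> Inv R"
    then have u: "u \<in> carrier R" "u \<otimes> u = \<one>"
      by (auto simp: Inv_def)
    \<comment> \<open>the factors of (u - 1)(u + 1) = 0 differ by the unit 2, so one of them is a unit\<close>
    then have prod: "(u \<ominus> \<one>) \<otimes> (u \<oplus> \<one>) = \<zero>" "(u \<oplus> \<one>) \<otimes> (u \<ominus> \<one>) = \<zero>"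
      and diff: "(u \<oplus> \<one>) \<ominus> (u \<ominus> \<one>) = \<one> \<oplus> \<one>"
      by algebra+
    have "\<one> \<oplus> \<one> \<notin> M"
      using Units_notin_M two_Units_if_odd_card[OF finite_carrier assms] by blast
    with diff have "u \<oplus> \<one> \<notin> M \<or> u \<ominus> \<one> \<notin> M"
      using diff_in_M by metis
    then show "u \<in> {\<one>, \<ominus> \<one>}"
    proof
      assume "u \<oplus> \<one> \<notin> M"
      then have "u \<ominus> \<one> = \<zero>"
        using u prod(2) Units_if_notin_M[of "u \<oplus> \<one>"] Units_mult_eq_zero[of "u \<oplus> \<one>" "u \<ominus> \<one>"]
        by blast
      with u show ?thesis
        using r_right_minus_eq[of u \<one>] by simp
    next
      assume "u \<ominus> \<one> \<notin> M"
      then have "u \<oplus> \<one> = \<zero>"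
        using u prod(1) Units_if_notin_M[of "u \<ominus> \<one>"] Units_mult_eq_zero[of "u \<ominus> \<one>" "u \<oplus> \<one>"]
        by blast
      with u show ?thesis
        using minus_equality[of u \<one>] by auto
    qed
  qed
qed

lemma Inv_minus_one_in_M_if_even_card:
  assumes "even (card (carrier R))" "u \<in> Inv R"
  shows "u \<ominus> \<one> \<in> M"
proof -
  have u: "u \<in> carrier R" "u \<otimes> u = \<one>"
    using assms(2) by (auto simp: Inv_def)
  then have "(u \<ominus> \<one>) \<otimes> (u \<ominus> \<one>) = (\<one> \<oplus> \<one>) \<otimes> (\<one> \<ominus> u)"
    by algebra
  also have "\<dots> \<in> M"
    using two_in_M_if_even_card[OF assms(1)] u by (simp add: M.I_r_closed)
  finally show ?thesis
    using primeideal.I_prime[OF maximalideal_prime[OF maximalideal_M]] u by blast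
qed

lemma diff_Inv_minus_one_in_M_if_even_card:
  assumes "even (card (carrier R))" "a \<in> M" "u \<in> Inv R"
  shows "(a \<ominus> u) \<ominus> \<one> \<in> M"
proof -
  have "a \<in> carrier R" "u \<in> carrier R"
    using assms(2,3) M.Icarr Inv_closed by auto
  then have "(a \<ominus> u) \<ominus> \<one> = (a \<ominus> (u \<ominus> \<one>)) \<ominus> (\<one> \<oplus> \<one>)"
    by algebra
  then show ?thesis
    using assms two_in_M_if_even_card Inv_minus_one_in_M_if_even_card diff_in_M by simp
qed

lemma diff_Inv_in_M_if_even_card:
  assumes "even (card (carrier R))" "a \<in> carrier R" "a \<ominus> \<one> \<in> M" "u \<in> Inv R"
  shows "a \<ominus> u \<in> M"
proof -
  have "u \<in> carrier R"
    using assms(4) Inv_closed by auto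
  with assms(2) have "a \<ominus> u = (a \<ominus> \<one>) \<ominus> (u \<ominus> \<one>)"
    by algebra
  then show ?thesis
    using assms Inv_minus_one_in_M_if_even_card diff_in_M by simp
qed

end

lemma finite_local_ringI:
  assumes "local_ring R" "finite (carrier R)"
  shows "finite_local_ring R (THE I. maximalideal I R)"
proof -
  from assms(1) have "cring R" "\<exists>!I. maximalideal I R"
    by (auto simp: local_ring_def)
  with assms(2) show ?thesis
    using theI'[of "\<lambda>I. maximalideal I R"]
    by (intro finite_local_ring.intro finite_local_ring_axioms.intro) auto
qed

context finite_local_ring
begin

lemma zero_component_subset_if_odd_card:
  assumes "odd (card (carrier R))"
  shows "zero_component R \<subseteq> range (\<lambda>k::nat. add_pow R k \<one>)"
proof
  fix y assume "y \<in> zero_component R"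
  then show "y \<in> range (\<lambda>k::nat. add_pow R k \<one>)"
  proof (induction rule: zero_component_induct)
    case zero
    show ?case
      using add.nat_pow_0[of \<one>] by (metis rangeI)
  next
    case (diff y u)
    then obtain k :: nat where k: "y = add_pow R k \<one>" by blast
    have "u = \<one> \<or> u = \<ominus> \<one>"
      using \<open>u \<in> Inv R\<close> Inv_eq_if_odd_card[OF assms] by blast
    then show ?case
    proof
      assume "u = \<one>"
      then have "y \<ominus> u = add_pow R k \<one> \<oplus> add_pow R (card (carrier R) - 1) \<one>"
        using k add_pow_card_minus_one[OF finite_carrier one_closed] by (simp add: a_minus_def)
      also have "\<dots> = add_pow R (k + (card (carrier R) - 1)) \<one>"
        by (rule add.nat_pow_mult) simp
      finally show ?thesis by blast
    next
      assume "u = \<ominus> \<one>"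
      then have "y \<ominus> u = add_pow R (Suc k) \<one>"
        using k by (simp add: a_minus_def)
      then show ?thesis by blast
    qed
  qed
qed

lemma card_prime_power_if_generated_by_one:
  assumes gen: "carrier R \<subseteq> range (\<lambda>k::nat. add_pow R k \<one>)"
  shows "\<exists>p n. Factorial_Ring.prime p \<and> n > 0 \<and> card (carrier R) = p ^ n"
proof (rule prime_power_if_unique_prime_divisor)
  let ?m = "card (carrier R)" and ?\<psi> = "\<lambda>k::nat. add_pow R k \<one>"
  have "card {\<zero>, \<one>} \<le> ?m"
    using finite_carrier by (intro card_mono) auto
  with one_neq_zero show "?m > 1" by simp
  have \<psi>_prime_in_M: "?\<psi> p \<in> M" if "Factorial_Ring.prime p" "p dvd ?m" for p
  proof (rule ccontr)
    assume "?\<psi> p \<notin> M"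
    then obtain y where "y \<in> carrier R" "?\<psi> p \<otimes> y = \<one>"
      using Units_if_notin_M[of "?\<psi> p"] by (auto simp: Units_def)
    moreover obtain k where "y = ?\<psi> k"
      using gen \<open>y \<in> carrier R\<close> by blast
    ultimately have "?\<psi> (p * k) = ?\<psi> 1"
      by (simp add: add_pow_one_mult)
    then have "(p * k) mod ?m = 1 mod ?m"
      using add_pow_one_eq_iff_mod[OF finite_carrier gen, of "p * k" 1] by blast
    moreover have "p dvd (p * k) mod ?m"
      using that(2) by (simp add: dvd_mod)
    ultimately have "p dvd 1"
      using \<open>?m > 1\<close> by simp
    with that(1) show False
      using not_prime_unit by blast
  qed
  show "p = q" if "Factorial_Ring.prime p" "Factorial_Ring.prime q" "p dvd ?m" "q dvd ?m" for p q
  proof (rule ccontr)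
    assume "p \<noteq> q"
    then have "coprime p q"
      using that primes_coprime by blast
    moreover have "p \<noteq> 0"
      using that(1) by auto
    ultimately obtain x y where "p * x = q * y + 1"
      using bezout_nat[of p q] by auto
    then have "?\<psi> p \<otimes> ?\<psi> x = ?\<psi> q \<otimes> ?\<psi> y \<oplus> \<one>"
      by (simp add: add_pow_one_mult)
    moreover have "?\<psi> p \<otimes> ?\<psi> x \<in> carrier R" "?\<psi> q \<otimes> ?\<psi> y \<in> carrier R"
      by simp_all
    ultimately have "\<one> = ?\<psi> p \<otimes> ?\<psi> x \<ominus> ?\<psi> q \<otimes> ?\<psi> y"
      by algebra
    also have "\<dots> \<in> M"
      using that \<psi>_prime_in_M by (simp add: diff_in_M M.I_r_closed)
    finally show False
      using one_notin_M by blast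
  qed
qed

lemma is_ring_iso_residue_ring_prime_power_if_connected:
  assumes "odd (card (carrier R))" "inv_cayley_connected R"
  shows "\<exists>p n. Factorial_Ring.prime (p::nat) \<and> odd p \<and> n > 0 \<and> R \<simeq> residue_ring (int p ^ n)"
proof -
  have gen: "carrier R \<subseteq> range (\<lambda>k::nat. add_pow R k \<one>)"
    using assms zero_component_subset_if_odd_card inv_cayley_connected_iff_zero_component by blast
  then obtain p n where "Factorial_Ring.prime p" "n > 0" "card (carrier R) = p ^ n"
    using card_prime_power_if_generated_by_one by blast
  moreover from this have "odd p"
    using assms(1) by simp
  moreover have "R \<simeq> residue_ring (int (card (carrier R)))"
    using is_ring_iso_residue_ring_if_generated_by_one[OF finite_carrier gen one_neq_zero] .
  ultimately show ?thesis
    by auto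
qed

end

section \<open>Direct products\<close>

lemma RDirProd_list_Cons_ops:
  assumes "x \<in> carrier R" "y \<in> carrier R"
    and "xs \<in> carrier (RDirProd_list Rs)" "ys \<in> carrier (RDirProd_list Rs)"
  shows "(x # xs) \<oplus>\<^bsub>RDirProd_list (R # Rs)\<^esub> (y # ys) =
           (x \<oplus>\<^bsub>R\<^esub> y) # (xs \<oplus>\<^bsub>RDirProd_list Rs\<^esub> ys)"
    and "(x # xs) \<otimes>\<^bsub>RDirProd_list (R # Rs)\<^esub> (y # ys) =
           (x \<otimes>\<^bsub>R\<^esub> y) # (xs \<otimes>\<^bsub>RDirProd_list Rs\<^esub> ys)"
proof -
  have carr: "(x, xs) \<in> carrier (RDirProd R (RDirProd_list Rs))"
    "(y, ys) \<in> carrier (RDirProd R (RDirProd_list Rs))"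
    using assms by (simp_all add: RDirProd_carrier)
  show "(x # xs) \<oplus>\<^bsub>RDirProd_list (R # Rs)\<^esub> (y # ys) =
           (x \<oplus>\<^bsub>R\<^esub> y) # (xs \<oplus>\<^bsub>RDirProd_list Rs\<^esub> ys)"
    using ring_hom_add[OF RDirProd_list_hom1 carr] by (simp add: RDirProd_def DirProd_def monoid.defs)
  show "(x # xs) \<otimes>\<^bsub>RDirProd_list (R # Rs)\<^esub> (y # ys) =
           (x \<otimes>\<^bsub>R\<^esub> y) # (xs \<otimes>\<^bsub>RDirProd_list Rs\<^esub> ys)"
    using ring_hom_mult[OF RDirProd_list_hom1 carr] by (simp add: RDirProd_def DirProd_def monoid.defs)
qed

lemma RDirProd_list_ops_nth:
  assumes "xs \<in> carrier (RDirProd_list Rs)" "ys \<in> carrier (RDirProd_list Rs)" "i < length Rs"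
  shows "(xs \<oplus>\<^bsub>RDirProd_list Rs\<^esub> ys) ! i = xs ! i \<oplus>\<^bsub>Rs ! i\<^esub> ys ! i"
    and "(xs \<otimes>\<^bsub>RDirProd_list Rs\<^esub> ys) ! i = xs ! i \<otimes>\<^bsub>Rs ! i\<^esub> ys ! i"
proof -
  have "(xs \<oplus>\<^bsub>RDirProd_list Rs\<^esub> ys) ! i = xs ! i \<oplus>\<^bsub>Rs ! i\<^esub> ys ! i \<and>
        (xs \<otimes>\<^bsub>RDirProd_list Rs\<^esub> ys) ! i = xs ! i \<otimes>\<^bsub>Rs ! i\<^esub> ys ! i"
    using assms
  proof (induction Rs arbitrary: xs ys i)
    case (Cons R Rs)
    from Cons.prems obtain x xs' y ys' where
      "xs = x # xs'" "x \<in> carrier R" "xs' \<in> carrier (RDirProd_list Rs)"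
      "ys = y # ys'" "y \<in> carrier R" "ys' \<in> carrier (RDirProd_list Rs)"
      by (auto simp: RDirProd_list_carrier)
    with Cons show ?case
      by (cases i) (simp_all add: RDirProd_list_Cons_ops)
  qed simp
  then show "(xs \<oplus>\<^bsub>RDirProd_list Rs\<^esub> ys) ! i = xs ! i \<oplus>\<^bsub>Rs ! i\<^esub> ys ! i"
    and "(xs \<otimes>\<^bsub>RDirProd_list Rs\<^esub> ys) ! i = xs ! i \<otimes>\<^bsub>Rs ! i\<^esub> ys ! i"
    by simp_all
qed

lemma RDirProd_list_one_nth: "i < length Rs \<Longrightarrow> \<one>\<^bsub>RDirProd_list Rs\<^esub> ! i = \<one>\<^bsub>Rs ! i\<^esub>"
  unfolding RDirProd_list_one by (induction Rs arbitrary: i) (auto simp: nth_Cons split: nat.splits)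

lemma RDirProd_list_zero_nth: "i < length Rs \<Longrightarrow> \<zero>\<^bsub>RDirProd_list Rs\<^esub> ! i = \<zero>\<^bsub>Rs ! i\<^esub>"
  unfolding RDirProd_list_zero by (induction Rs arbitrary: i) (auto simp: nth_Cons split: nat.splits)

locale ring_list =
  fixes Rs :: "('a, 'b) ring_scheme list"
  assumes ring_nth: "\<And>i. i < length Rs \<Longrightarrow> ring (Rs ! i)"
begin

abbreviation P where "P \<equiv> RDirProd_list Rs"

sublocale P: ring P
  using ring_nth by (rule RDirProd_list_is_ring)

lemma carrier_P_iff:
  "x \<in> carrier P \<longleftrightarrow> length x = length Rs \<and> (\<forall>i < length Rs. x ! i \<in> carrier (Rs ! i))"
  using RDirProd_list_carrier_mem RDirProd_list_carrier_memI by metis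

lemma P_eqI:
  "x \<in> carrier P \<Longrightarrow> y \<in> carrier P \<Longrightarrow> (\<And>i. i < length Rs \<Longrightarrow> x ! i = y ! i) \<Longrightarrow> x = y"
  by (rule nth_equalityI) (simp_all add: carrier_P_iff)

lemma a_inv_P_nth:
  assumes "x \<in> carrier P" "i < length Rs"
  shows "(\<ominus>\<^bsub>P\<^esub> x) ! i = \<ominus>\<^bsub>Rs ! i\<^esub> (x ! i)"
proof -
  interpret Ri: ring "Rs ! i" using ring_nth[OF assms(2)] .
  have "(\<ominus>\<^bsub>P\<^esub> x) ! i \<oplus>\<^bsub>Rs ! i\<^esub> x ! i = \<zero>\<^bsub>Rs ! i\<^esub>"
    using RDirProd_list_ops_nth(1)[of "\<ominus>\<^bsub>P\<^esub> x" Rs x i] RDirProd_list_zero_nth[OF assms(2)] assms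
    by (simp add: P.l_neg)
  then show ?thesis
    using assms carrier_P_iff Ri.minus_equality by (metis P.add.inv_closed)
qed

lemma a_minus_P_nth:
  assumes "x \<in> carrier P" "y \<in> carrier P" "i < length Rs"
  shows "(x \<ominus>\<^bsub>P\<^esub> y) ! i = x ! i \<ominus>\<^bsub>Rs ! i\<^esub> y ! i"
  using assms RDirProd_list_ops_nth(1)[of x Rs "\<ominus>\<^bsub>P\<^esub> y" i] a_inv_P_nth
  by (simp add: a_minus_def)

lemmas P_nth_simps = RDirProd_list_ops_nth a_minus_P_nth RDirProd_list_one_nth RDirProd_list_zero_nth

lemma P_nth_closed: "x \<in> carrier P \<Longrightarrow> i < length Rs \<Longrightarrow> x ! i \<in> carrier (Rs ! i)"
  by (simp add: carrier_P_iff)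

lemma update_P_nth:
  "x \<in> carrier P \<Longrightarrow> i < length Rs \<Longrightarrow> x[j := a] ! i = (if i = j then a else x ! i)"
  by (simp add: carrier_P_iff nth_list_update)

lemma update_closed:
  assumes "x \<in> carrier P" "j < length Rs" "a \<in> carrier (Rs ! j)"
  shows "x[j := a] \<in> carrier P"
  using assms by (auto simp: carrier_P_iff nth_list_update)

lemma update_diff_update:
  assumes "x \<in> carrier P" "j < length Rs" "a \<in> carrier (Rs ! j)" "b \<in> carrier (Rs ! j)"
  shows "x[j := a] \<ominus>\<^bsub>P\<^esub> x[j := b] = (\<zero>\<^bsub>P\<^esub>)[j := a \<ominus>\<^bsub>Rs ! j\<^esub> b]"
proof -
  interpret Rj: ring "Rs ! j" using ring_nth[OF assms(2)] .
  show ?thesis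
  proof (rule P_eqI)
    fix i assume "i < length Rs"
    interpret Ri: ring "Rs ! i" using ring_nth[OF \<open>i < length Rs\<close>] .
    show "(x[j := a] \<ominus>\<^bsub>P\<^esub> x[j := b]) ! i = (\<zero>\<^bsub>P\<^esub>)[j := a \<ominus>\<^bsub>Rs ! j\<^esub> b] ! i"
      using assms \<open>i < length Rs\<close> update_closed P_nth_closed
      by (simp add: P_nth_simps update_P_nth)
  qed (use assms update_closed in auto)
qed

lemma update_add_zero_update:
  assumes "x \<in> carrier P" "j < length Rs" "a \<in> carrier (Rs ! j)" "b \<in> carrier (Rs ! j)"
  shows "x[j := a] \<oplus>\<^bsub>P\<^esub> (\<zero>\<^bsub>P\<^esub>)[j := b] = x[j := a \<oplus>\<^bsub>Rs ! j\<^esub> b]"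
proof -
  interpret Rj: ring "Rs ! j" using ring_nth[OF assms(2)] .
  show ?thesis
  proof (rule P_eqI)
    fix i assume "i < length Rs"
    interpret Ri: ring "Rs ! i" using ring_nth[OF \<open>i < length Rs\<close>] .
    show "(x[j := a] \<oplus>\<^bsub>P\<^esub> (\<zero>\<^bsub>P\<^esub>)[j := b]) ! i = x[j := a \<oplus>\<^bsub>Rs ! j\<^esub> b] ! i"
      using assms \<open>i < length Rs\<close> update_closed P_nth_closed
      by (simp add: P_nth_simps update_P_nth)
  qed (use assms update_closed in auto)
qed

lemma Inv_P_nth: "u \<in> Inv P \<Longrightarrow> i < length Rs \<Longrightarrow> u ! i \<in> Inv (Rs ! i)"
  using RDirProd_list_ops_nth(2)[of u Rs u i] by (simp add: Inv_def P_nth_closed P_nth_simps)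

lemma one_update_Inv:
  assumes "j < length Rs" "w \<in> Inv (Rs ! j)"
  shows "(\<one>\<^bsub>P\<^esub>)[j := w] \<in> Inv P"
proof -
  have w: "w \<in> carrier (Rs ! j)" "w \<otimes>\<^bsub>Rs ! j\<^esub> w = \<one>\<^bsub>Rs ! j\<^esub>"
    using assms(2) by (auto simp: Inv_def)
  have "(\<one>\<^bsub>P\<^esub>)[j := w] \<otimes>\<^bsub>P\<^esub> (\<one>\<^bsub>P\<^esub>)[j := w] = \<one>\<^bsub>P\<^esub>"
  proof (rule P_eqI)
    fix i assume "i < length Rs"
    interpret Ri: ring "Rs ! i" using ring_nth[OF \<open>i < length Rs\<close>] .
    show "((\<one>\<^bsub>P\<^esub>)[j := w] \<otimes>\<^bsub>P\<^esub> (\<one>\<^bsub>P\<^esub>)[j := w]) ! i = \<one>\<^bsub>P\<^esub> ! i"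
      using assms(1) w \<open>i < length Rs\<close> update_closed
      by (simp add: P_nth_simps update_P_nth)
  qed (use assms(1) w update_closed in auto)
  with assms(1) w show ?thesis
    by (simp add: Inv_def update_closed)
qed

lemma zero_component_P_nth:
  assumes "y \<in> zero_component P" "i < length Rs"
  shows "y ! i \<in> zero_component (Rs ! i)"
  using assms(1)
proof (induction rule: P.zero_component_induct)
  case zero
  show ?case
    using assms(2) by (simp add: P_nth_simps zero_component_def)
next
  case (diff y u)
  interpret Ri: ring "Rs ! i" using ring_nth[OF assms(2)] .
  have "y ! i \<ominus>\<^bsub>Rs ! i\<^esub> u ! i \<in> zero_component (Rs ! i)"
    using diff Inv_P_nth[OF _ assms(2)] Ri.Inv_subset_zero_component Ri.zero_component_diff
    by blast
  then show ?case
    using diff assms(2) P.Inv_closed by (simp add: a_minus_P_nth)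
qed

lemma inv_cayley_connected_nth:
  assumes "inv_cayley_connected P" "i < length Rs"
  shows "inv_cayley_connected (Rs ! i)"
proof -
  interpret Ri: ring "Rs ! i" using ring_nth[OF assms(2)] .
  show ?thesis
    unfolding Ri.inv_cayley_connected_iff_zero_component
  proof
    fix a assume "a \<in> carrier (Rs ! i)"
    then have "(\<zero>\<^bsub>P\<^esub>)[i := a] \<in> zero_component P"
      using assms update_closed P.inv_cayley_connected_iff_zero_component by blast
    then show "a \<in> zero_component (Rs ! i)"
      using zero_component_P_nth[OF _ assms(2)] assms(2) update_P_nth by fastforce
  qed
qed

lemma mem_additive_subgroup_if_updates_mem:
  assumes H: "additive_subgroup H P" and y: "y \<in> carrier P"
    and updates: "\<And>j. j < length Rs \<Longrightarrow> (\<zero>\<^bsub>P\<^esub>)[j := y ! j] \<in> H"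
  shows "y \<in> H"
proof -
  interpret H: additive_subgroup H P by (rule H)
  define T where "T k = map (\<lambda>i. if i < k then y ! i else \<zero>\<^bsub>Rs ! i\<^esub>) [0..<length Rs]" for k
  have T_nth: "T k ! i = (if i < k then y ! i else \<zero>\<^bsub>Rs ! i\<^esub>)" if "i < length Rs" for k i
    using that by (simp add: T_def)
  have T_closed: "T k \<in> carrier P" for k
    using y P_nth_closed[OF P.zero_closed] by (auto simp: carrier_P_iff T_nth P_nth_simps) (simp add: T_def)
  have "T k \<in> H" for k
  proof (induction k)
    case 0
    have "T 0 = \<zero>\<^bsub>P\<^esub>"
      by (rule P_eqI) (simp_all add: T_closed T_nth P_nth_simps)
    then show ?case by simp
  next
    case (Suc k)
    show ?case
    proof (cases "k < length Rs")
      case True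
      have "T (Suc k) = T k \<oplus>\<^bsub>P\<^esub> (\<zero>\<^bsub>P\<^esub>)[k := y ! k]"
      proof (rule P_eqI)
        fix i assume "i < length Rs"
        interpret Ri: ring "Rs ! i" using ring_nth[OF \<open>i < length Rs\<close>] .
        show "T (Suc k) ! i = (T k \<oplus>\<^bsub>P\<^esub> (\<zero>\<^bsub>P\<^esub>)[k := y ! k]) ! i"
          using True \<open>i < length Rs\<close> y T_closed update_closed P_nth_closed
          by (cases "k = i") (simp_all add: T_nth P_nth_simps update_P_nth)
      qed (use True T_closed update_closed y P_nth_closed in auto)
      with Suc.IH updates[OF True] show ?thesis
        by simp
    next
      case False
      then have "T (Suc k) = T k"
        by (auto simp: T_def)
      with Suc.IH show ?thesis by simp
    qed
  qed
  moreover have "T (length Rs) = y"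
    by (rule P_eqI) (simp_all add: T_closed T_nth y)
  ultimately show ?thesis by metis
qed

lemma zero_update_same: "j < length Rs \<Longrightarrow> (\<zero>\<^bsub>P\<^esub>)[j := \<zero>\<^bsub>Rs ! j\<^esub>] = \<zero>\<^bsub>P\<^esub>"
  using list_update_id[of "\<zero>\<^bsub>P\<^esub>" j] by (simp add: P_nth_simps)

lemma zero_update_add_pow_mem_zero_component:
  assumes "j < length Rs" "a \<in> carrier (Rs ! j)" "(\<zero>\<^bsub>P\<^esub>)[j := a] \<in> zero_component P"
  shows "(\<zero>\<^bsub>P\<^esub>)[j := add_pow (Rs ! j) (k::nat) a] \<in> zero_component P"
proof (induction k)
  case 0
  interpret Rj: ring "Rs ! j" using ring_nth[OF assms(1)] .
  show ?case
    using assms(1) zero_update_same by (simp add: zero_component_def)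
next
  case (Suc k)
  interpret Rj: ring "Rs ! j" using ring_nth[OF assms(1)] .
  have "(\<zero>\<^bsub>P\<^esub>)[j := add_pow (Rs ! j) (Suc k) a] =
        (\<zero>\<^bsub>P\<^esub>)[j := add_pow (Rs ! j) k a] \<oplus>\<^bsub>P\<^esub> (\<zero>\<^bsub>P\<^esub>)[j := a]"
    using update_add_zero_update[OF P.zero_closed assms(1)] assms(2) by simp
  with Suc.IH assms(3) show ?case
    by (simp add: P.zero_component_add)
qed

lemma zero_update_mem_zero_component_if_odd:
  assumes "j < length Rs" "odd (card (carrier (Rs ! j)))"
    and gen: "carrier (Rs ! j) \<subseteq> range (\<lambda>k::nat. add_pow (Rs ! j) k \<one>\<^bsub>Rs ! j\<^esub>)"
    and "a \<in> carrier (Rs ! j)"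
  shows "(\<zero>\<^bsub>P\<^esub>)[j := a] \<in> zero_component P"
proof -
  interpret Rj: ring "Rs ! j" using ring_nth[OF assms(1)] .
  let ?two = "\<one>\<^bsub>Rs ! j\<^esub> \<oplus>\<^bsub>Rs ! j\<^esub> \<one>\<^bsub>Rs ! j\<^esub>"
  have "finite (carrier (Rs ! j))"
    using assms(2) card.infinite by fastforce
  have "\<ominus>\<^bsub>Rs ! j\<^esub> \<one>\<^bsub>Rs ! j\<^esub> \<in> Inv (Rs ! j)" "\<one>\<^bsub>Rs ! j\<^esub> \<in> Inv (Rs ! j)"
    by (simp_all add: Inv_def Rj.l_minus Rj.r_minus)
  then have "(\<one>\<^bsub>P\<^esub>)[j := \<one>\<^bsub>Rs ! j\<^esub>] \<ominus>\<^bsub>P\<^esub> (\<one>\<^bsub>P\<^esub>)[j := \<ominus>\<^bsub>Rs ! j\<^esub> \<one>\<^bsub>Rs ! j\<^esub>]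
          \<in> zero_component P"
    using one_update_Inv[OF assms(1)] P.Inv_subset_zero_component P.zero_component_diff by blast
  moreover have "\<one>\<^bsub>Rs ! j\<^esub> \<ominus>\<^bsub>Rs ! j\<^esub> \<ominus>\<^bsub>Rs ! j\<^esub> \<one>\<^bsub>Rs ! j\<^esub> = ?two"
    by (simp add: a_minus_def)
  ultimately have "(\<zero>\<^bsub>P\<^esub>)[j := ?two] \<in> zero_component P"
    by (simp add: update_diff_update[OF P.one_closed assms(1)])
  moreover obtain k :: nat where "a = add_pow (Rs ! j) k ?two"
    using Rj.generated_by_Units_if_generated_by_one[OF
        Rj.two_Units_if_odd_card[OF \<open>finite (carrier (Rs ! j))\<close> assms(2)] gen] assms(4)
    by blast
  ultimately show ?thesis
    using zero_update_add_pow_mem_zero_component[OF assms(1)] by simp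
qed

lemma zero_update_mem_zero_component_if_connected:
  assumes "e < length Rs" "inv_cayley_connected (Rs ! e)"
    and one_zero: "(\<one>\<^bsub>P\<^esub>)[e := \<zero>\<^bsub>Rs ! e\<^esub>] \<in> zero_component P"
    and "a \<in> carrier (Rs ! e)"
  shows "(\<zero>\<^bsub>P\<^esub>)[e := a] \<in> zero_component P"
proof -
  interpret Re: ring "Rs ! e" using ring_nth[OF assms(1)] .
  have "a \<in> zero_component (Rs ! e)"
    using assms(2,4) Re.inv_cayley_connected_iff_zero_component by blast
  then show ?thesis
  proof (induction rule: Re.zero_component_induct)
    case zero
    show ?case
      using assms(1) zero_update_same by (simp add: zero_component_def)
  next
    case (diff y u)
    have "u \<in> carrier (Rs ! e)"
      using diff Re.Inv_closed by blast
    moreover have "u \<ominus>\<^bsub>Rs ! e\<^esub> \<zero>\<^bsub>Rs ! e\<^esub> = u"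
      using \<open>u \<in> carrier (Rs ! e)\<close> by (simp add: a_minus_def)
    ultimately have "(\<zero>\<^bsub>P\<^esub>)[e := u] = (\<one>\<^bsub>P\<^esub>)[e := u] \<ominus>\<^bsub>P\<^esub> (\<one>\<^bsub>P\<^esub>)[e := \<zero>\<^bsub>Rs ! e\<^esub>]"
      by (simp add: update_diff_update[OF P.one_closed assms(1)])
    then have "(\<zero>\<^bsub>P\<^esub>)[e := u] \<in> zero_component P"
      using one_zero one_update_Inv[OF assms(1) diff(3)] P.Inv_subset_zero_component
        P.zero_component_diff by auto
    moreover have "(\<zero>\<^bsub>P\<^esub>)[e := y \<ominus>\<^bsub>Rs ! e\<^esub> u] = (\<zero>\<^bsub>P\<^esub>)[e := y] \<ominus>\<^bsub>P\<^esub> (\<zero>\<^bsub>P\<^esub>)[e := u]"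
      using diff \<open>u \<in> carrier (Rs ! e)\<close> by (simp add: update_diff_update[OF P.zero_closed assms(1)])
    ultimately show ?case
      using diff(1) P.zero_component_diff by simp
  qed
qed

lemma zero_update_one_notin_zero_component_if_two_even:
  assumes "i < length Rs" "j < length Rs" "i \<noteq> j"
    and "finite_local_ring (Rs ! i) Mi" "finite_local_ring (Rs ! j) Mj"
    and "even (card (carrier (Rs ! i)))" "even (card (carrier (Rs ! j)))"
  shows "(\<zero>\<^bsub>P\<^esub>)[i := \<one>\<^bsub>Rs ! i\<^esub>] \<notin> zero_component P"
proof
  interpret Ri: finite_local_ring "Rs ! i" Mi by fact
  interpret Rj: finite_local_ring "Rs ! j" Mj by fact
  \<comment> \<open>modulo Mi and Mj involutions are 1 and 2 is 0, so subtracting one swaps the two cases of H\<close>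
  define H where "H = {x. x ! i \<in> Mi \<and> x ! j \<in> Mj \<or>
    x ! i \<ominus>\<^bsub>Rs ! i\<^esub> \<one>\<^bsub>Rs ! i\<^esub> \<in> Mi \<and> x ! j \<ominus>\<^bsub>Rs ! j\<^esub> \<one>\<^bsub>Rs ! j\<^esub> \<in> Mj}"
  assume "(\<zero>\<^bsub>P\<^esub>)[i := \<one>\<^bsub>Rs ! i\<^esub>] \<in> zero_component P"
  then have "(\<zero>\<^bsub>P\<^esub>)[i := \<one>\<^bsub>Rs ! i\<^esub>] \<in> H"
  proof (induction rule: P.zero_component_induct)
    case zero
    show ?case
      using assms(1,2) by (simp add: H_def P_nth_simps)
  next
    case (diff y u)
    have "y ! i \<in> carrier (Rs ! i)" "y ! j \<in> carrier (Rs ! j)"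
      using diff(2) assms(1,2) P_nth_closed by auto
    moreover have "u ! i \<in> Inv (Rs ! i)" "u ! j \<in> Inv (Rs ! j)"
      using diff(3) assms(1,2) Inv_P_nth by auto
    ultimately have
      "y ! i \<in> Mi \<Longrightarrow> (y ! i \<ominus>\<^bsub>Rs ! i\<^esub> u ! i) \<ominus>\<^bsub>Rs ! i\<^esub> \<one>\<^bsub>Rs ! i\<^esub> \<in> Mi"
      "y ! j \<in> Mj \<Longrightarrow> (y ! j \<ominus>\<^bsub>Rs ! j\<^esub> u ! j) \<ominus>\<^bsub>Rs ! j\<^esub> \<one>\<^bsub>Rs ! j\<^esub> \<in> Mj"
      "y ! i \<ominus>\<^bsub>Rs ! i\<^esub> \<one>\<^bsub>Rs ! i\<^esub> \<in> Mi \<Longrightarrow> y ! i \<ominus>\<^bsub>Rs ! i\<^esub> u ! i \<in> Mi"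
      "y ! j \<ominus>\<^bsub>Rs ! j\<^esub> \<one>\<^bsub>Rs ! j\<^esub> \<in> Mj \<Longrightarrow> y ! j \<ominus>\<^bsub>Rs ! j\<^esub> u ! j \<in> Mj"
      using assms(6,7) Ri.diff_Inv_minus_one_in_M_if_even_card Ri.diff_Inv_in_M_if_even_card
        Rj.diff_Inv_minus_one_in_M_if_even_card Rj.diff_Inv_in_M_if_even_card
      by blast+
    moreover have "(y \<ominus>\<^bsub>P\<^esub> u) ! i = y ! i \<ominus>\<^bsub>Rs ! i\<^esub> u ! i"
      "(y \<ominus>\<^bsub>P\<^esub> u) ! j = y ! j \<ominus>\<^bsub>Rs ! j\<^esub> u ! j"
      using diff(2,3) assms(1,2) P.Inv_closed by (simp_all add: a_minus_P_nth)
    ultimately show ?case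
      using diff(1) unfolding H_def by auto
  qed
  moreover have "\<zero>\<^bsub>Rs ! j\<^esub> \<ominus>\<^bsub>Rs ! j\<^esub> \<one>\<^bsub>Rs ! j\<^esub> \<notin> Mj"
    using Rj.one_notin_M Rj.M.a_inv_closed by (fastforce simp: a_minus_def)
  moreover have "(\<zero>\<^bsub>P\<^esub>)[i := \<one>\<^bsub>Rs ! i\<^esub>] ! i = \<one>\<^bsub>Rs ! i\<^esub>"
    "(\<zero>\<^bsub>P\<^esub>)[i := \<one>\<^bsub>Rs ! i\<^esub>] ! j = \<zero>\<^bsub>Rs ! j\<^esub>"
    using assms(1-3) by (simp_all add: update_P_nth P_nth_simps)
  ultimately show False
    using Ri.one_notin_M unfolding H_def by simp
qed

lemma even_factors_unique_if_connected:
  assumes "inv_cayley_connected P" "i < length Rs" "j < length Rs"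
    and "finite_local_ring (Rs ! i) Mi" "finite_local_ring (Rs ! j) Mj"
    and "even (card (carrier (Rs ! i)))" "even (card (carrier (Rs ! j)))"
  shows "i = j"
proof (rule ccontr)
  interpret Ri: ring "Rs ! i" using ring_nth[OF assms(2)] .
  assume "i \<noteq> j"
  then have "(\<zero>\<^bsub>P\<^esub>)[i := \<one>\<^bsub>Rs ! i\<^esub>] \<notin> zero_component P"
    using zero_update_one_notin_zero_component_if_two_even assms(2-7) by blast
  with assms(1,2) show False
    using P.inv_cayley_connected_iff_zero_component update_closed[OF P.zero_closed] by blast
qed

lemma inv_cayley_connected_if_factors:
  assumes even_unique: "\<And>i j. i < length Rs \<Longrightarrow> j < length Rs \<Longrightarrow>
      even (card (carrier (Rs ! i))) \<Longrightarrow> even (card (carrier (Rs ! j))) \<Longrightarrow> i = j"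
    and even_connected: "\<And>i. i < length Rs \<Longrightarrow> even (card (carrier (Rs ! i))) \<Longrightarrow>
      inv_cayley_connected (Rs ! i)"
    and odd_generated: "\<And>j. j < length Rs \<Longrightarrow> odd (card (carrier (Rs ! j))) \<Longrightarrow>
      carrier (Rs ! j) \<subseteq> range (\<lambda>k::nat. add_pow (Rs ! j) k \<one>\<^bsub>Rs ! j\<^esub>)"
  shows "inv_cayley_connected P"
proof -
  have odd_mem: "(\<zero>\<^bsub>P\<^esub>)[j := a] \<in> zero_component P"
    if "j < length Rs" "odd (card (carrier (Rs ! j)))" "a \<in> carrier (Rs ! j)" for j a
    using zero_update_mem_zero_component_if_odd[OF that(1,2) odd_generated[OF that(1,2)] that(3)] .
  have "y \<in> zero_component P" if "y \<in> carrier P" for y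
  proof (rule mem_additive_subgroup_if_updates_mem[OF P.additive_subgroup_zero_component that])
    fix e assume "e < length Rs"
    show "(\<zero>\<^bsub>P\<^esub>)[e := y ! e] \<in> zero_component P"
    proof (cases "odd (card (carrier (Rs ! e)))")
      case True
      then show ?thesis
        using odd_mem \<open>e < length Rs\<close> P_nth_closed[OF that] by simp
    next
      case False
      interpret Re: ring "Rs ! e" using ring_nth[OF \<open>e < length Rs\<close>] .
      have "(\<one>\<^bsub>P\<^esub>)[e := \<zero>\<^bsub>Rs ! e\<^esub>] \<in> zero_component P"
      proof (rule mem_additive_subgroup_if_updates_mem[OF P.additive_subgroup_zero_component])
        show "(\<one>\<^bsub>P\<^esub>)[e := \<zero>\<^bsub>Rs ! e\<^esub>] \<in> carrier P"
          using update_closed[OF P.one_closed \<open>e < length Rs\<close> Re.zero_closed] .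
        fix j assume "j < length Rs"
        show "(\<zero>\<^bsub>P\<^esub>)[j := (\<one>\<^bsub>P\<^esub>)[e := \<zero>\<^bsub>Rs ! e\<^esub>] ! j] \<in> zero_component P"
        proof (cases "j = e")
          case True
          then show ?thesis
            using \<open>e < length Rs\<close> zero_update_same P.zero_closed
            by (simp add: update_P_nth zero_component_def)
        next
          case False
          then have "odd (card (carrier (Rs ! j)))"
            using even_unique[OF \<open>j < length Rs\<close> \<open>e < length Rs\<close>] \<open>\<not> odd _\<close> by blast
          then have "(\<zero>\<^bsub>P\<^esub>)[j := \<one>\<^bsub>Rs ! j\<^esub>] \<in> zero_component P"
            using odd_mem \<open>j < length Rs\<close> P_nth_closed[OF P.one_closed] by (simp add: P_nth_simps)
          with False \<open>j < length Rs\<close> show ?thesis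
            by (simp add: update_P_nth P_nth_simps)
        qed
      qed
      then show ?thesis
        using zero_update_mem_zero_component_if_connected[OF \<open>e < length Rs\<close>
            even_connected[OF \<open>e < length Rs\<close>]] False P_nth_closed[OF that \<open>e < length Rs\<close>]
        by blast
    qed
  qed
  then show ?thesis
    using P.inv_cayley_connected_iff_zero_component by blast
qed

end

theorem mainTheorem1:
  fixes Rs :: "('a ring) list"
  assumes "Rs \<noteq> []"
    and "\<And>i. i < length Rs \<Longrightarrow> local_ring (Rs ! i)"
    and "\<And>i. i < length Rs \<Longrightarrow> finite (carrier (Rs ! i))"
  shows "inv_cayley_connected (RDirProd_list Rs) \<longleftrightarrow>
     ((\<forall>i < length Rs. \<forall>j < length Rs.
          even (card (carrier (Rs ! i))) \<and> even (card (carrier (Rs ! j))) \<longrightarrow> i = j) \<and>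
      (\<forall>i < length Rs. even (card (carrier (Rs ! i))) \<longrightarrow> inv_cayley_connected (Rs ! i)) \<and>
      (\<forall>j < length Rs. odd (card (carrier (Rs ! j))) \<longrightarrow>
          (\<exists>p n. Factorial_Ring.prime (p::nat) \<and> odd p \<and> n > 0 \<and> Rs ! j \<simeq> residue_ring (int p ^ n))))"
proof -
  define M where "M i = (THE I. maximalideal I (Rs ! i))" for i
  have local: "finite_local_ring (Rs ! i) (M i)" if "i < length Rs" for i
    unfolding M_def using finite_local_ringI assms(2,3) that by blast
  interpret ring_list Rs
    using local by (intro ring_list.intro cring.axioms(1) finite_local_ring.axioms(1))
  have generated: "carrier (Rs ! j) \<subseteq> range (\<lambda>k::nat. add_pow (Rs ! j) k \<one>\<^bsub>Rs ! j\<^esub>)"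
    if "j < length Rs" "Factorial_Ring.prime (p::nat)" "n > 0" "Rs ! j \<simeq> residue_ring (int p ^ n)"
    for j p n
    using ring.generated_by_one_if_is_ring_iso_residue_ring[OF ring_nth[OF that(1)] that(4)]
      prime_gt_1_nat[OF that(2)] that(3) by (simp add: one_less_power)
  show ?thesis (is "_ \<longleftrightarrow> ?even_unique \<and> ?even_connected \<and> ?odd_residue")
  proof
    assume "inv_cayley_connected P"
    then show "?even_unique \<and> ?even_connected \<and> ?odd_residue"
      using even_factors_unique_if_connected[OF _ _ _ local local] inv_cayley_connected_nth
        finite_local_ring.is_ring_iso_residue_ring_prime_power_if_connected[OF local] by blast
  next
    assume "?even_unique \<and> ?even_connected \<and> ?odd_residue"
    then show "inv_cayley_connected P"
      using generated by (intro inv_cayley_connected_if_factors) blast+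
  qed
qed

end
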